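(* Let $\Phi$ (dimension $d$) and $\Psi$ (dimension $e$) be $\mathbf t$-modules over $K$, let $\delta\in\mathrm{Der}(\Phi,\Psi)$, and let $X$ be the $\mathbf t$-module with $X_a=\begin{bmatrix}\Phi_a&0\\ \delta(a)&\Psi_a\end{bmatrix}$, giving the short exact sequence $0\to\Psi\xrightarrow{i}X\xrightarrow{\pi}\Phi\to0$ with $i=\begin{bmatrix}0\\ I_e\end{bmatrix}$, $\pi=\begin{bmatrix}I_d&0\end{bmatrix}$. Then: (i) for every $\mathbf t$-module $\Xi$ of dimension $r$ and every morphism $g:\Xi\to\Phi$ of $\mathbf t$-modules, the pullback of this sequence along $g$ exists in the category of $\mathbf t$-modules and is the $\mathbf t$-module $Y$ with $Y_a=\begin{bmatrix}\Xi_a&0\\ \delta(a)g&\Psi_a\end{bmatrix}$ (i.e. the extension given by the biderivation $\delta\cdot g$), together with the morphisms $\begin{bmatrix}I_r&0\end{bmatrix}:Y\to\Xi$ and $\begin{bmatrix}g&0\\0&I_e\end{bmatrix}:Y\to X$; (ii) for every $\mathbf t$-module $\Xi$ of dimension $r$ and every morphism $f:\Psi\to\Xi$ of $\mathbf t$-modules, the pushout of this sequence along $f$ exists in the category of $\mathbf t$-modules and is the $\mathbf t$-module $Y$ with $Y_a=\begin{bmatrix}\Phi_a&0\\ f\delta(a)&\Xi_a\end{bmatrix}$ (the extension given by the biderivation $f\cdot\delta$), together with the morphisms $\begin{bmatrix}0\\ I_r\end{bmatrix}:\Xi\to Y$ and $\begin{bmatrix}I_d&0\\0&f\end{bmatrix}:X\to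 Y$.
   Context: $A=\mathbb F_q[t]$, $K$ a field of characteristic $p$ with $\mathbb F_q$-algebra map $\iota:A\to K$, $\theta=\iota(t)$; $K\{\tau\}$ twisted polynomials with $\tau x=x^q\tau$. A $\mathbf t$-module of dimension $d$: $\mathbb F_q$-algebra homomorphism $\Phi:\mathbb F_q[t]\to\mathrm{Mat}_d(K\{\tau\})$ with $\Phi_t=(\theta I+N)+\sum_{i\ge1}M_i\tau^i$, $N$ nilpotent. A morphism from $\Psi$ (dim $e$) to $\Phi$ (dim $d$) is $f\in\mathrm{Mat}_{d\times e}(K\{\tau\})$ with $f\Psi_t=\Phi_tf$; composition is matrix multiplication. $\mathrm{Der}(\Phi,\Psi)$ is the space of $\mathbb F_q$-linear $\delta:\mathbb F_q[t]\to\mathrm{Mat}_{e\times d}(K\{\tau\})$ with $\delta(ab)=\Psi_a\delta(b)+\delta(a)\Phi_b$. *)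

theory Defs
  imports "HOL-Computational_Algebra.Polynomial" "Jordan_Normal_Form.Matrix"
begin

text \<open>K is the type 'k (a field).  q = p^m with p = char K.
  A = F_q[t] is represented as the set of polynomials in 'k poly (variable t)
  whose coefficients lie in F_q; iota(a) = poly a theta.
  Twisted polynomials K{tau} are represented by 'k poly as well
  (coefficient i = coefficient of tau^i), with the twisted product tmult.\<close>

definition Fq :: "nat \<Rightarrow> 'k::field set" where
  "Fq q = {x. x ^ q = x}"

definition Aset :: "nat \<Rightarrow> 'k::field poly set" where
  "Aset q = {a. \<forall>i. coeff a i \<in> Fq q}"

definition tvar :: "'k::field poly" where
  "tvar = [:0, 1:]"

text \<open>twisted product in K{tau}: (sum a_i tau^i)(sum b_j tau^j) = sum a_i b_j^(q^i) tau^(i+j)\<close>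
definition tmult :: "nat \<Rightarrow> 'k::field poly \<Rightarrow> 'k poly \<Rightarrow> 'k poly" where
  "tmult q f g = (\<Sum>i\<le>degree f. monom (coeff f i) i * map_poly (\<lambda>c. c ^ (q ^ i)) g)"

definition tmat_mult :: "nat \<Rightarrow> 'k::field poly mat \<Rightarrow> 'k poly mat \<Rightarrow> 'k poly mat" where
  "tmat_mult q M N = mat (dim_row M) (dim_col N)
     (\<lambda>(i,j). \<Sum>k<dim_col M. tmult q (M $$ (i,k)) (N $$ (k,j)))"

definition row_block :: "'a::zero mat \<Rightarrow> 'a mat \<Rightarrow> 'a mat" where
  "row_block M N = four_block_mat M N (0\<^sub>m 0 (dim_col M)) (0\<^sub>m 0 (dim_col N))"

definition const_part :: "'k::field poly mat \<Rightarrow> 'k mat" where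
  "const_part M = mat (dim_row M) (dim_col M) (\<lambda>ij. coeff (M $$ ij) 0)"

text \<open>An F_q-algebra homomorphism A -> Mat_d(K{tau}) (scalars c in F_q act as
  the constant twisted polynomials [:c:], which are central)\<close>
definition alg_hom_A :: "nat \<Rightarrow> nat \<Rightarrow> ('k::field poly \<Rightarrow> 'k poly mat) \<Rightarrow> bool" where
  "alg_hom_A q d Phi \<longleftrightarrow>
     (\<forall>a\<in>Aset q. Phi a \<in> carrier_mat d d) \<and>
     (\<forall>a\<in>Aset q. \<forall>b\<in>Aset q. Phi (a + b) = Phi a + Phi b) \<and>
     (\<forall>c\<in>Fq q. \<forall>a\<in>Aset q. Phi (Polynomial.smult c a) = [:c:] \<cdot>\<^sub>m Phi a) \<and>
     (\<forall>a\<in>Aset q. \<forall>b\<in>Aset q. Phi (a * b) = tmat_mult q (Phi a) (Phi b)) \<and>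
     Phi 1 = 1\<^sub>m d"

text \<open>t-module of dimension d: Phi_t = (theta I + N) + sum M_i tau^i with N nilpotent\<close>
definition tmodule :: "nat \<Rightarrow> 'k::field \<Rightarrow> nat \<Rightarrow> ('k poly \<Rightarrow> 'k poly mat) \<Rightarrow> bool" where
  "tmodule q theta d Phi \<longleftrightarrow> alg_hom_A q d Phi \<and>
     (\<exists>n. (const_part (Phi tvar) - theta \<cdot>\<^sub>m 1\<^sub>m d) ^\<^sub>m n = 0\<^sub>m d d)"

definition tmorph :: "nat \<Rightarrow> nat \<Rightarrow> ('k::field poly \<Rightarrow> 'k poly mat) \<Rightarrow> nat \<Rightarrow> ('k poly \<Rightarrow> 'k poly mat)
    \<Rightarrow> 'k poly mat \<Rightarrow> bool" where
  "tmorph q e Psi d Phi f \<longleftrightarrow> f \<in> carrier_mat d e \<and>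
     tmat_mult q f (Psi tvar) = tmat_mult q (Phi tvar) f"

definition is_der :: "nat \<Rightarrow> nat \<Rightarrow> ('k::field poly \<Rightarrow> 'k poly mat) \<Rightarrow> nat \<Rightarrow> ('k poly \<Rightarrow> 'k poly mat)
    \<Rightarrow> ('k poly \<Rightarrow> 'k poly mat) \<Rightarrow> bool" where
  "is_der q d Phi e Psi delta \<longleftrightarrow>
     (\<forall>a\<in>Aset q. delta a \<in> carrier_mat e d) \<and>
     (\<forall>a\<in>Aset q. \<forall>b\<in>Aset q. delta (a + b) = delta a + delta b) \<and>
     (\<forall>c\<in>Fq q. \<forall>a\<in>Aset q. delta (Polynomial.smult c a) = [:c:] \<cdot>\<^sub>m delta a) \<and>
     (\<forall>a\<in>Aset q. \<forall>b\<in>Aset q.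
        delta (a * b) = tmat_mult q (Psi a) (delta b) + tmat_mult q (delta a) (Phi b))"

text \<open>Pullback in the category of t-modules of PiM : X -> Phi and g : Xi -> Phi,
  with candidate object Y (dim y) and projections P1 : Y -> Xi, P2 : Y -> X\<close>
definition is_pullback :: "nat \<Rightarrow> 'k::field \<Rightarrow>
    nat \<Rightarrow> ('k poly \<Rightarrow> 'k poly mat) \<Rightarrow> nat \<Rightarrow> ('k poly \<Rightarrow> 'k poly mat) \<Rightarrow>
    nat \<Rightarrow> ('k poly \<Rightarrow> 'k poly mat) \<Rightarrow> 'k poly mat \<Rightarrow> 'k poly mat \<Rightarrow>
    nat \<Rightarrow> ('k poly \<Rightarrow> 'k poly mat) \<Rightarrow> 'k poly mat \<Rightarrow> 'k poly mat \<Rightarrow> bool" where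
  "is_pullback q theta dX X dP Phi dXi Xi PiM g dY Y P1 P2 \<longleftrightarrow>
     tmodule q theta dY Y \<and> tmorph q dY Y dXi Xi P1 \<and> tmorph q dY Y dX X P2 \<and>
     tmat_mult q g P1 = tmat_mult q PiM P2 \<and>
     (\<forall>s Z u v. tmodule q theta s Z \<and> tmorph q s Z dXi Xi u \<and> tmorph q s Z dX X v \<and>
        tmat_mult q g u = tmat_mult q PiM v \<longrightarrow>
        (\<exists>!w. tmorph q s Z dY Y w \<and> tmat_mult q P1 w = u \<and> tmat_mult q P2 w = v))"

text \<open>Pushout in the category of t-modules of I : Psi -> X and f : Psi -> Xi,
  with candidate object Y (dim y) and injections J1 : Xi -> Y, J2 : X -> Y\<close>
definition is_pushout :: "nat \<Rightarrow> 'k::field \<Rightarrow>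
    nat \<Rightarrow> ('k poly \<Rightarrow> 'k poly mat) \<Rightarrow> nat \<Rightarrow> ('k poly \<Rightarrow> 'k poly mat) \<Rightarrow>
    nat \<Rightarrow> ('k poly \<Rightarrow> 'k poly mat) \<Rightarrow> 'k poly mat \<Rightarrow> 'k poly mat \<Rightarrow>
    nat \<Rightarrow> ('k poly \<Rightarrow> 'k poly mat) \<Rightarrow> 'k poly mat \<Rightarrow> 'k poly mat \<Rightarrow> bool" where
  "is_pushout q theta dX X dS Psi dXi Xi IM f dY Y J1 J2 \<longleftrightarrow>
     tmodule q theta dY Y \<and> tmorph q dXi Xi dY Y J1 \<and> tmorph q dX X dY Y J2 \<and>
     tmat_mult q J1 f = tmat_mult q J2 IM \<and>
     (\<forall>s Z u v. tmodule q theta s Z \<and> tmorph q dXi Xi s Z u \<and> tmorph q dX X s Z v \<and>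
        tmat_mult q u f = tmat_mult q v IM \<longrightarrow>
        (\<exists>!w. tmorph q dY Y s Z w \<and> tmat_mult q w J1 = u \<and> tmat_mult q w J2 = v))"

end

theory Submission
  imports Defs "HOL-Computational_Algebra.Primes"
begin

text \<open>
  A morphism g of t-modules commutes with every \<open>\<Phi>\<^sub>a\<close> and not only with \<open>\<Phi>\<^sub>t\<close>, because
  \<open>\<Phi>\<close> is determined by \<open>\<Phi>\<^sub>t\<close>; hence \<open>\<delta> g\<close> and \<open>f \<delta>\<close> are again derivations and
  the block matrices Y are t-modules.  A morphism from Z into the extension
  \<open>[\<Phi> 0; \<delta> \<Psi>]\<close> is a column \<open>[v\<^sub>1; v\<^sub>2]\<close> with \<open>v\<^sub>1 : Z \<rightarrow> \<Phi>\<close> a morphism and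
  \<open>v\<^sub>2 Z\<^sub>t = \<delta>\<^sub>t v\<^sub>1 + \<Psi>\<^sub>t v\<^sub>2\<close>; dually a morphism out of it is a row \<open>[v u]\<close> with
  \<open>u : \<Psi> \<rightarrow> Z\<close> a morphism and \<open>v \<Phi>\<^sub>t + u \<delta>\<^sub>t = Z\<^sub>t v\<close>.  With these descriptions
  the mediating morphism is forced to be \<open>[u; v\<^sub>2]\<close> for the pullback and \<open>[v\<^sub>1 u]\<close>
  for the pushout, and it is a morphism precisely because of the compatibility
  of u and v.
\<close>

section \<open>Block matrices\<close>

lemma sum_lessThan_add: "(\<Sum>k<a + b. f k) = (\<Sum>k<a. f k) + (\<Sum>k<b. f (a + k))" for b :: nat
  by (induction b) (auto simp: add.assoc)

lemma append_rows_split: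
  assumes "A \<in> carrier_mat (n1 + n2) m"
  obtains A1 A2 where "A1 \<in> carrier_mat n1 m" "A2 \<in> carrier_mat n2 m" "A = A1 @\<^sub>r A2"
proof
  show "A = mat n1 m (\<lambda>(i, j). A $$ (i, j)) @\<^sub>r mat n2 m (\<lambda>(i, j). A $$ (n1 + i, j))"
    by (rule eq_matI) (use assms in \<open>auto simp: append_rows_def\<close>)
qed auto

lemma row_block_split:
  assumes "A \<in> carrier_mat n (m1 + m2)"
  obtains A1 A2 where "A1 \<in> carrier_mat n m1" "A2 \<in> carrier_mat n m2" "A = row_block A1 A2"
proof
  show "A = row_block (mat n m1 (\<lambda>(i, j). A $$ (i, j))) (mat n m2 (\<lambda>(i, j). A $$ (i, m1 + j)))"
    by (rule eq_matI) (use assms in \<open>auto simp: row_block_def\<close>)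
qed auto

lemma append_rows_inject:
  assumes "A \<in> carrier_mat n1 m" "B \<in> carrier_mat n2 m" "A' \<in> carrier_mat n1 m" "B' \<in> carrier_mat n2 m"
  shows "A @\<^sub>r B = A' @\<^sub>r B' \<longleftrightarrow> A = A' \<and> B = B'"
proof
  assume eq: "A @\<^sub>r B = A' @\<^sub>r B'"
  show "A = A' \<and> B = B'"
  proof (intro conjI eq_matI)
    fix i j assume "i < dim_row A'" "j < dim_col A'"
    then show "A $$ (i, j) = A' $$ (i, j)"
      using arg_cong[OF eq, of "\<lambda>M. M $$ (i, j)"] assms by (simp add: append_rows_def)
  next
    fix i j assume "i < dim_row B'" "j < dim_col B'"
    then show "B $$ (i, j) = B' $$ (i, j)"
      using arg_cong[OF eq, of "\<lambda>M. M $$ (n1 + i, j)"] assms by (simp add: append_rows_def)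
  qed (use assms in auto)
qed simp

lemma row_block_inject:
  assumes "A \<in> carrier_mat n m1" "B \<in> carrier_mat n m2" "A' \<in> carrier_mat n m1" "B' \<in> carrier_mat n m2"
  shows "row_block A B = row_block A' B' \<longleftrightarrow> A = A' \<and> B = B'"
proof
  assume eq: "row_block A B = row_block A' B'"
  show "A = A' \<and> B = B'"
  proof (intro conjI eq_matI)
    fix i j assume "i < dim_row A'" "j < dim_col A'"
    then show "A $$ (i, j) = A' $$ (i, j)"
      using arg_cong[OF eq, of "\<lambda>M. M $$ (i, j)"] assms by (simp add: row_block_def)
  next
    fix i j assume "i < dim_row B'" "j < dim_col B'"
    then show "B $$ (i, j) = B' $$ (i, j)"
      using arg_cong[OF eq, of "\<lambda>M. M $$ (i, m1 + j)"] assms by (simp add: row_block_def)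
  qed (use assms in auto)
qed simp

lemma row_block_carrier [simp, intro]:
  "A \<in> carrier_mat n m1 \<Longrightarrow> B \<in> carrier_mat n m2 \<Longrightarrow> row_block A B \<in> carrier_mat n (m1 + m2)"
  unfolding row_block_def by auto

lemma add_zero_mat_right [simp]: "dim_row A = n \<Longrightarrow> dim_col A = m \<Longrightarrow> A + 0\<^sub>m n m = A"
  for A :: "'a::monoid_add mat"
  by (rule eq_matI) auto

lemma add_zero_mat_left [simp]: "dim_row A = n \<Longrightarrow> dim_col A = m \<Longrightarrow> 0\<^sub>m n m + A = A"
  for A :: "'a::monoid_add mat"
  by (rule eq_matI) auto

lemma mat_add_self_eq_imp_zero:
  fixes M :: "'a::ab_group_add mat"
  assumes "M \<in> carrier_mat n m" and "M + M = M"
  shows "M = 0\<^sub>m n m"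
proof (rule eq_matI)
  fix i j assume ij: "i < dim_row (0\<^sub>m n m)" "j < dim_col (0\<^sub>m n m)"
  then have "M $$ (i, j) + M $$ (i, j) = M $$ (i, j)"
    using assms(1) arg_cong[OF assms(2), of "\<lambda>N. N $$ (i, j)"] by simp
  then show "M $$ (i, j) = 0\<^sub>m n m $$ (i, j)" using ij by simp
qed (use assms in auto)

lemma pow_mat_add:
  fixes A :: "'a::semiring_1 mat"
  assumes "A \<in> carrier_mat n n"
  shows "A ^\<^sub>m (i + j) = A ^\<^sub>m i * A ^\<^sub>m j"
proof (induction j)
  case (Suc j)
  have "A ^\<^sub>m (i + Suc j) = A ^\<^sub>m i * A ^\<^sub>m j * A" by (simp add: Suc)
  also have "\<dots> = A ^\<^sub>m i * A ^\<^sub>m Suc j"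
    using assms by (subst assoc_mult_mat) auto
  finally show ?case .
qed (use assms in simp)

lemma pow_lower_block_mat:
  fixes A :: "'a::semiring_1 mat"
  assumes A: "A \<in> carrier_mat n n" and C: "C \<in> carrier_mat m n" and D: "D \<in> carrier_mat m m"
  obtains E where "E \<in> carrier_mat m n"
    and "four_block_mat A (0\<^sub>m n m) C D ^\<^sub>m k = four_block_mat (A ^\<^sub>m k) (0\<^sub>m n m) E (D ^\<^sub>m k)"
proof (induction k arbitrary: thesis)
  case 0
  show ?case using A D by (intro 0[of "0\<^sub>m m n"]) auto
next
  case (Suc k)
  obtain E where E: "E \<in> carrier_mat m n"
    and IH: "four_block_mat A (0\<^sub>m n m) C D ^\<^sub>m k = four_block_mat (A ^\<^sub>m k) (0\<^sub>m n m) E (D ^\<^sub>m k)"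
    using Suc.IH by blast
  have "four_block_mat A (0\<^sub>m n m) C D ^\<^sub>m Suc k
      = four_block_mat (A ^\<^sub>m k) (0\<^sub>m n m) E (D ^\<^sub>m k) * four_block_mat A (0\<^sub>m n m) C D"
    by (simp add: IH)
  also have "\<dots> = four_block_mat (A ^\<^sub>m Suc k) (0\<^sub>m n m) (E * A + D ^\<^sub>m k * C) (D ^\<^sub>m Suc k)"
    using A C D E
    by (subst mult_four_block_mat[OF pow_carrier_mat[OF A] _ E pow_carrier_mat[OF D] A _ C D]) auto
  finally show ?case using A C D E by (intro Suc.prems) auto
qed

lemma nilpotent_lower_block_mat:
  fixes A :: "'a::semiring_1 mat"
  assumes A: "A \<in> carrier_mat n n" and C: "C \<in> carrier_mat m n" and D: "D \<in> carrier_mat m m"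
    and "A ^\<^sub>m a = 0\<^sub>m n n" and "D ^\<^sub>m b = 0\<^sub>m m m"
  shows "four_block_mat A (0\<^sub>m n m) C D ^\<^sub>m (b + a) = 0\<^sub>m (n + m) (n + m)"
proof -
  let ?M = "four_block_mat A (0\<^sub>m n m) C D"
  obtain E1 where E1: "E1 \<in> carrier_mat m n" and Ma: "?M ^\<^sub>m a = four_block_mat (0\<^sub>m n n) (0\<^sub>m n m) E1 (D ^\<^sub>m a)"
    using pow_lower_block_mat[OF A C D, of a] assms(4) by metis
  obtain E2 where E2: "E2 \<in> carrier_mat m n" and Mb: "?M ^\<^sub>m b = four_block_mat (A ^\<^sub>m b) (0\<^sub>m n m) E2 (0\<^sub>m m m)"
    using pow_lower_block_mat[OF A C D, of b] assms(5) by metis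
  \<comment> \<open>\<open>?M ^\<^sub>m b\<close> has zero second block column and \<open>?M ^\<^sub>m a\<close> zero first block row.\<close>
  have "?M ^\<^sub>m (b + a) = ?M ^\<^sub>m b * ?M ^\<^sub>m a"
    using A D by (intro pow_mat_add) auto
  also have "\<dots> = four_block_mat (0\<^sub>m n n) (0\<^sub>m n m) (0\<^sub>m m n) (0\<^sub>m m m)"
    unfolding Ma Mb using A D E1 E2
    by (subst mult_four_block_mat[OF pow_carrier_mat[OF A] _ E2 _ _ _ E1 pow_carrier_mat[OF D]]) auto
  finally show ?thesis by simp
qed

abbreviation tmod_ext ::
  "nat \<Rightarrow> nat \<Rightarrow> ('k::field poly \<Rightarrow> 'k poly mat) \<Rightarrow> ('k poly \<Rightarrow> 'k poly mat)
    \<Rightarrow> ('k poly \<Rightarrow> 'k poly mat) \<Rightarrow> 'k poly \<Rightarrow> 'k poly mat" where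
  "tmod_ext d e Phi delta Psi \<equiv> \<lambda>a. four_block_mat (Phi a) (0\<^sub>m d e) (delta a) (Psi a)"

section \<open>The twisted polynomial ring\<close>

locale q_frobenius =
  fixes q :: nat and field :: "'k::field itself"
  assumes power_q_add: "(x + y :: 'k) ^ q = x ^ q + y ^ q"
begin

lemma q_pos: "q > 0"
proof (rule ccontr)
  assume "\<not> q > 0"
  then have "(1 :: 'k) = 1 + 1" using power_q_add[of 0 0] by simp
  then show False by (metis add_cancel_left_right one_neq_zero)
qed

lemma power_q_power_add: "(x + y :: 'k) ^ (q ^ n) = x ^ (q ^ n) + y ^ (q ^ n)"
proof (induction n)
  case (Suc n)
  have "(x + y) ^ (q ^ Suc n) = ((x + y) ^ (q ^ n)) ^ q"
    by (simp add: power_mult[symmetric] mult.commute)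
  also have "\<dots> = (x ^ (q ^ n)) ^ q + (y ^ (q ^ n)) ^ q" by (simp add: Suc power_q_add)
  also have "\<dots> = x ^ (q ^ Suc n) + y ^ (q ^ Suc n)"
    by (simp add: power_mult[symmetric] mult.commute)
  finally show ?case .
qed simp

lemma power_q_power_sum: "(sum f A :: 'k) ^ (q ^ n) = (\<Sum>i\<in>A. f i ^ (q ^ n))"
  using q_pos by (induction A rule: infinite_finite_induct) (auto simp: power_q_power_add)

lemma Fq_power_q_power: "c \<in> Fq q \<Longrightarrow> (c :: 'k) ^ (q ^ n) = c"
  by (induction n) (simp_all add: Fq_def power_mult mult.commute)

text \<open>In \<open>K{\<tau>}\<close> one has \<open>\<tau>\<^sup>n g = frob_poly n g \<tau>\<^sup>n\<close>.\<close>

definition frob_poly :: "nat \<Rightarrow> 'k poly \<Rightarrow> 'k poly" where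
  "frob_poly n = map_poly (\<lambda>c. c ^ (q ^ n))"

lemma coeff_frob_poly [simp]: "coeff (frob_poly n g) i = coeff g i ^ (q ^ n)"
  using q_pos by (simp add: frob_poly_def coeff_map_poly)

lemma frob_poly_0 [simp]: "frob_poly n 0 = 0"
  by (simp add: frob_poly_def)

lemma frob_poly_1 [simp]: "frob_poly n 1 = 1"
  by (simp add: frob_poly_def)

lemma frob_poly_id [simp]: "frob_poly 0 g = g"
  by (rule poly_eqI) simp

lemma frob_poly_add: "frob_poly n (f + g) = frob_poly n f + frob_poly n g"
  by (rule poly_eqI) (simp add: power_q_power_add)

lemma frob_poly_sum: "frob_poly n (sum f A) = (\<Sum>i\<in>A. frob_poly n (f i))"
  by (induction A rule: infinite_finite_induct) (auto simp: frob_poly_add)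

lemma frob_poly_mult: "frob_poly n (f * g) = frob_poly n f * frob_poly n g"
  by (rule poly_eqI) (simp add: coeff_mult power_q_power_sum power_mult_distrib)

lemma frob_poly_monom: "frob_poly n (monom a j) = monom (a ^ (q ^ n)) j"
  using q_pos by (simp add: frob_poly_def map_poly_monom)

lemma frob_poly_frob_poly: "frob_poly i (frob_poly j g) = frob_poly (i + j) g"
  by (rule poly_eqI) (simp add: power_mult[symmetric] power_add mult.commute)

lemma frob_poly_const: "c \<in> Fq q \<Longrightarrow> frob_poly n [:c:] = [:c:]"
  using q_pos by (intro poly_eqI) (simp add: Fq_power_q_power coeff_pCons split: nat.split)

lemma tmult_eq_sum:
  fixes f g :: "'k poly"
  assumes "degree f \<le> N"
  shows "tmult q f g = (\<Sum>i\<le>N. monom (coeff f i) i * frob_poly i g)"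
  unfolding tmult_def frob_poly_def[symmetric]
  by (rule sum.mono_neutral_left) (use assms in \<open>auto simp: coeff_eq_0\<close>)

lemma tmult_add_left: "tmult q (f + g) (h :: 'k poly) = tmult q f h + tmult q g h"
proof -
  have "degree (f + g) \<le> max (degree f) (degree g)" by (rule degree_add_le) auto
  then show ?thesis
    by (simp add: tmult_eq_sum[of _ "max (degree f) (degree g)"] sum.distrib
        add_monom[symmetric] distrib_right)
qed

lemma tmult_add_right: "tmult q f (g + h :: 'k poly) = tmult q f g + tmult q f h"
  unfolding tmult_def frob_poly_def[symmetric]
  by (simp add: frob_poly_add distrib_left sum.distrib)

lemma tmult_0_left [simp]: "tmult q 0 (g :: 'k poly) = 0"
  by (simp add: tmult_def)

lemma tmult_0_right [simp]: "tmult q (f :: 'k poly) 0 = 0"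
  by (simp add: tmult_def)

lemma tmult_sum_left: "tmult q (sum f A) (h :: 'k poly) = (\<Sum>i\<in>A. tmult q (f i) h)"
  by (induction A rule: infinite_finite_induct) (auto simp: tmult_add_left)

lemma tmult_sum_right: "tmult q (h :: 'k poly) (sum f A) = (\<Sum>i\<in>A. tmult q h (f i))"
  by (induction A rule: infinite_finite_induct) (auto simp: tmult_add_right)

lemma tmult_monom_left: "tmult q (monom a n) (g :: 'k poly) = monom a n * frob_poly n g"
proof -
  have "tmult q (monom a n) g = (\<Sum>i\<le>n. monom (coeff (monom a n) i) i * frob_poly i g)"
    by (rule tmult_eq_sum) (simp add: degree_monom_le)
  also have "\<dots> = (\<Sum>i\<in>{n}. monom (coeff (monom a n) i) i * frob_poly i g)"
    by (rule sum.mono_neutral_right) auto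
  finally show ?thesis by simp
qed

lemma tmult_assoc: "tmult q (tmult q f g) (h :: 'k poly) = tmult q f (tmult q g h)"
proof -
  have frob_g: "frob_poly i g = (\<Sum>j\<le>degree g. monom (coeff g j ^ (q ^ i)) j)" for i
    by (subst (1) poly_as_sum_of_monoms[symmetric]) (simp add: frob_poly_sum frob_poly_monom)
  have "tmult q f g = (\<Sum>i\<le>degree f. \<Sum>j\<le>degree g.
      monom (coeff f i * coeff g j ^ (q ^ i)) (i + j))"
    by (simp add: tmult_eq_sum[of f "degree f"] frob_g sum_distrib_left mult_monom)
  then have "tmult q (tmult q f g) h = (\<Sum>i\<le>degree f. \<Sum>j\<le>degree g.
      monom (coeff f i * coeff g j ^ (q ^ i)) (i + j) * frob_poly (i + j) h)"
    by (simp add: tmult_sum_left tmult_monom_left)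
  also have "\<dots> = tmult q f (tmult q g h)"
    by (simp add: tmult_eq_sum[of f "degree f"] tmult_eq_sum[of g "degree g"] frob_poly_sum
        frob_poly_mult frob_poly_monom frob_poly_frob_poly sum_distrib_left mult_monom
        mult.assoc[symmetric])
  finally show ?thesis .
qed

lemma tmult_1_left [simp]: "tmult q 1 (g :: 'k poly) = g"
  using tmult_monom_left[of 1 0 g] by (simp add: monom_0 one_pCons)

lemma tmult_1_right [simp]: "tmult q (f :: 'k poly) 1 = f"
  by (simp add: tmult_eq_sum[of f "degree f"] poly_as_sum_of_monoms)

lemma tmult_const_mult_left: "tmult q ([:c:] * f) (g :: 'k poly) = [:c:] * tmult q f g"
proof -
  have "degree ([:c:] * f) \<le> degree f" by (simp add: degree_smult_le)
  then show ?thesis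
    by (simp add: tmult_eq_sum[of _ "degree f"] tmult_eq_sum[of f "degree f"] sum_distrib_left
        smult_monom[symmetric] mult.assoc)
qed

lemma tmult_const_mult_right: "c \<in> Fq q \<Longrightarrow> tmult q (f :: 'k poly) ([:c:] * g) = [:c:] * tmult q f g"
  unfolding tmult_eq_sum[of f "degree f", OF order.refl] sum_distrib_left
  by (simp only: frob_poly_mult frob_poly_const mult_ac)

section \<open>Matrices over the twisted polynomial ring\<close>

abbreviation tmat_times :: "'k poly mat \<Rightarrow> 'k poly mat \<Rightarrow> 'k poly mat" (infixl \<open>\<star>\<close> 70)
  where "A \<star> B \<equiv> tmat_mult q A B"

lemma dim_tmat_mult [simp]: "dim_row (A \<star> B) = dim_row A" "dim_col (A \<star> B) = dim_col B"
  by (simp_all add: tmat_mult_def)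

lemma index_tmat_mult [simp]:
  "i < dim_row A \<Longrightarrow> j < dim_col B \<Longrightarrow>
   (A \<star> B) $$ (i, j) = (\<Sum>k<dim_col A. tmult q (A $$ (i, k)) (B $$ (k, j)))"
  by (simp add: tmat_mult_def)

lemma tmat_mult_carrier [simp, intro]:
  "A \<in> carrier_mat n m \<Longrightarrow> B \<in> carrier_mat m' l \<Longrightarrow> A \<star> B \<in> carrier_mat n l"
  unfolding carrier_mat_def by simp

lemma tmat_mult_assoc:
  assumes "dim_col A = dim_row B"
  shows "A \<star> B \<star> C = A \<star> (B \<star> C)"
proof (rule eq_matI)
  fix i j assume ij: "i < dim_row (A \<star> (B \<star> C))" "j < dim_col (A \<star> (B \<star> C))"
  have "(A \<star> B \<star> C) $$ (i, j) = (\<Sum>k'<dim_col B. \<Sum>k<dim_col A.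
      tmult q (A $$ (i, k)) (tmult q (B $$ (k, k')) (C $$ (k', j))))"
    using ij by (simp add: tmult_sum_left tmult_assoc)
  also have "\<dots> = (\<Sum>k<dim_col A. \<Sum>k'<dim_col B.
      tmult q (A $$ (i, k)) (tmult q (B $$ (k, k')) (C $$ (k', j))))"
    by (rule sum.swap)
  also have "\<dots> = (A \<star> (B \<star> C)) $$ (i, j)"
    using assms ij by (simp add: tmult_sum_right)
  finally show "(A \<star> B \<star> C) $$ (i, j) = (A \<star> (B \<star> C)) $$ (i, j)" .
qed auto

lemma tmat_mult_add_left:
  "dim_row A = dim_row B \<Longrightarrow> dim_col A = dim_col B \<Longrightarrow> (A + B) \<star> C = A \<star> C + B \<star> C"
  by (rule eq_matI) (auto simp: tmult_add_left sum.distrib)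

lemma tmat_mult_add_right:
  "dim_col A = dim_row B \<Longrightarrow> dim_row B = dim_row C \<Longrightarrow> dim_col B = dim_col C \<Longrightarrow>
   A \<star> (B + C) = A \<star> B + A \<star> C"
  by (rule eq_matI) (auto simp: tmult_add_right sum.distrib)

lemma tmat_mult_one_left [simp]: "dim_row A = n \<Longrightarrow> 1\<^sub>m n \<star> A = A"
  by (rule eq_matI) (auto simp: if_distrib[of "\<lambda>x. tmult q x _"] cong: if_cong)

lemma tmat_mult_one_right [simp]: "dim_col A = n \<Longrightarrow> A \<star> 1\<^sub>m n = A"
  by (rule eq_matI) (auto simp: if_distrib[of "tmult q _"] cong: if_cong)

lemma tmat_mult_zero_left [simp]: "dim_row B = m \<Longrightarrow> 0\<^sub>m n m \<star> B = 0\<^sub>m n (dim_col B)"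
  by (rule eq_matI) auto

lemma tmat_mult_zero_right [simp]: "dim_col A = m \<Longrightarrow> A \<star> 0\<^sub>m m l = 0\<^sub>m (dim_row A) l"
  by (rule eq_matI) auto

lemma tmat_mult_smult_left: "([:c:] \<cdot>\<^sub>m A) \<star> B = [:c:] \<cdot>\<^sub>m (A \<star> B)"
  by (rule eq_matI) (auto simp: tmult_const_mult_left sum_distrib_left simp del: mult_pCons_left)

lemma tmat_mult_smult_right:
  "c \<in> Fq q \<Longrightarrow> dim_col A = dim_row B \<Longrightarrow>
   A \<star> ([:c:] \<cdot>\<^sub>m B) = [:c:] \<cdot>\<^sub>m (A \<star> B)"
  by (rule eq_matI) (auto simp: tmult_const_mult_right sum_distrib_left simp del: mult_pCons_left)

lemma tmat_mult_four_block:
  assumes "A1 \<in> carrier_mat n1 m1" "B1 \<in> carrier_mat n1 m2"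
    "C1 \<in> carrier_mat n2 m1" "D1 \<in> carrier_mat n2 m2"
    "A2 \<in> carrier_mat m1 k1" "B2 \<in> carrier_mat m1 k2"
    "C2 \<in> carrier_mat m2 k1" "D2 \<in> carrier_mat m2 k2"
  shows "four_block_mat A1 B1 C1 D1 \<star> four_block_mat A2 B2 C2 D2
    = four_block_mat (A1 \<star> A2 + B1 \<star> C2) (A1 \<star> B2 + B1 \<star> D2)
        (C1 \<star> A2 + D1 \<star> C2) (C1 \<star> B2 + D1 \<star> D2)"
  by (rule eq_matI) (use assms in \<open>auto simp: sum_lessThan_add\<close>)

lemma tmat_mult_append_rows_left:
  "A \<in> carrier_mat n1 m \<Longrightarrow> B \<in> carrier_mat n2 m \<Longrightarrow> M \<in> carrier_mat m k \<Longrightarrow>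
   (A @\<^sub>r B) \<star> M = (A \<star> M) @\<^sub>r (B \<star> M)"
  by (rule eq_matI) (auto simp: append_rows_def)

lemma tmat_mult_row_block_right:
  "M \<in> carrier_mat n m \<Longrightarrow> A \<in> carrier_mat m k1 \<Longrightarrow> B \<in> carrier_mat m k2 \<Longrightarrow>
   M \<star> row_block A B = row_block (M \<star> A) (M \<star> B)"
  by (rule eq_matI) (auto simp: row_block_def)

lemma tmat_mult_row_block_append_rows:
  "A \<in> carrier_mat n m1 \<Longrightarrow> B \<in> carrier_mat n m2 \<Longrightarrow> C \<in> carrier_mat m1 k \<Longrightarrow> D \<in> carrier_mat m2 k \<Longrightarrow>
   row_block A B \<star> (C @\<^sub>r D) = A \<star> C + B \<star> D"
  by (rule eq_matI) (auto simp: row_block_def append_rows_def sum_lessThan_add)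

lemma tmat_mult_row_block_four_block:
  assumes "A \<in> carrier_mat n m1" "B \<in> carrier_mat n m2"
    "E \<in> carrier_mat m1 k1" "F \<in> carrier_mat m1 k2" "G \<in> carrier_mat m2 k1" "H \<in> carrier_mat m2 k2"
  shows "row_block A B \<star> four_block_mat E F G H = row_block (A \<star> E + B \<star> G) (A \<star> F + B \<star> H)"
  by (rule eq_matI) (use assms in \<open>auto simp: row_block_def sum_lessThan_add\<close>)

lemma tmat_mult_four_block_append_rows:
  assumes "E \<in> carrier_mat n1 m1" "F \<in> carrier_mat n1 m2" "G \<in> carrier_mat n2 m1" "H \<in> carrier_mat n2 m2"
    "A \<in> carrier_mat m1 k" "B \<in> carrier_mat m2 k"
  shows "four_block_mat E F G H \<star> (A @\<^sub>r B) = (E \<star> A + F \<star> B) @\<^sub>r (G \<star> A + H \<star> B)"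
  by (rule eq_matI) (use assms in \<open>auto simp: append_rows_def sum_lessThan_add\<close>)

lemma tmat_mult_row_block_one_zero:
  "A \<in> carrier_mat n k \<Longrightarrow> B \<in> carrier_mat m k \<Longrightarrow> row_block (1\<^sub>m n) (0\<^sub>m n m) \<star> (A @\<^sub>r B) = A"
  by (subst tmat_mult_row_block_append_rows) auto

lemma tmat_mult_append_rows_zero_one:
  "A \<in> carrier_mat k n \<Longrightarrow> B \<in> carrier_mat k m \<Longrightarrow> row_block A B \<star> (0\<^sub>m n m @\<^sub>r 1\<^sub>m m) = B"
  by (subst tmat_mult_row_block_append_rows) auto

lemma tmat_mult_four_block_one_append_rows:
  "g \<in> carrier_mat d r \<Longrightarrow> A \<in> carrier_mat r s \<Longrightarrow> B \<in> carrier_mat e s \<Longrightarrow>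
   four_block_mat g (0\<^sub>m d e) (0\<^sub>m e r) (1\<^sub>m e) \<star> (A @\<^sub>r B) = (g \<star> A) @\<^sub>r B"
  by (subst tmat_mult_four_block_append_rows) auto

lemma tmat_mult_row_block_four_block_one:
  "f \<in> carrier_mat r e \<Longrightarrow> A \<in> carrier_mat s d \<Longrightarrow> B \<in> carrier_mat s r \<Longrightarrow>
   row_block A B \<star> four_block_mat (1\<^sub>m d) (0\<^sub>m d e) (0\<^sub>m r d) f = row_block A (B \<star> f)"
  by (subst tmat_mult_row_block_four_block) auto

section \<open>t-modules, morphisms and derivations\<close>

lemma Fq_0 [simp]: "(0 :: 'k) \<in> Fq q"
  using q_pos by (simp add: Fq_def)

lemma Fq_1 [simp]: "(1 :: 'k) \<in> Fq q"
  by (simp add: Fq_def)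

lemma Aset_pCons_iff: "pCons (a :: 'k) p \<in> Aset q \<longleftrightarrow> a \<in> Fq q \<and> p \<in> Aset q"
proof
  assume "pCons a p \<in> Aset q"
  then have "coeff (pCons a p) 0 \<in> Fq q" "\<And>i. coeff (pCons a p) (Suc i) \<in> Fq q"
    unfolding Aset_def by blast+
  then show "a \<in> Fq q \<and> p \<in> Aset q" by (simp add: Aset_def)
qed (auto simp: Aset_def coeff_pCons split: nat.split)

lemma Aset_0 [simp]: "(0 :: 'k poly) \<in> Aset q"
  by (simp add: Aset_def)

lemma Aset_1 [simp]: "(1 :: 'k poly) \<in> Aset q"
  by (simp add: one_pCons Aset_pCons_iff)

lemma Aset_tvar [simp]: "(tvar :: 'k poly) \<in> Aset q"
  by (simp add: tvar_def Aset_pCons_iff)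

lemma
  fixes P :: "'k poly \<Rightarrow> 'k poly mat"
  assumes "alg_hom_A q n P"
  shows alg_hom_A_carrier: "a \<in> Aset q \<Longrightarrow> P a \<in> carrier_mat n n"
    and alg_hom_A_add: "a \<in> Aset q \<Longrightarrow> b \<in> Aset q \<Longrightarrow> P (a + b) = P a + P b"
    and alg_hom_A_smult: "c \<in> Fq q \<Longrightarrow> a \<in> Aset q \<Longrightarrow> P (Polynomial.smult c a) = [:c:] \<cdot>\<^sub>m P a"
    and alg_hom_A_mult: "a \<in> Aset q \<Longrightarrow> b \<in> Aset q \<Longrightarrow> P (a * b) = P a \<star> P b"
    and alg_hom_A_1: "P 1 = 1\<^sub>m n"
  using assms unfolding alg_hom_A_def by auto

lemma
  fixes Phi Psi delta :: "'k poly \<Rightarrow> 'k poly mat"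
  assumes "is_der q d Phi e Psi delta"
  shows is_der_carrier: "a \<in> Aset q \<Longrightarrow> delta a \<in> carrier_mat e d"
    and is_der_add: "a \<in> Aset q \<Longrightarrow> b \<in> Aset q \<Longrightarrow> delta (a + b) = delta a + delta b"
    and is_der_smult: "c \<in> Fq q \<Longrightarrow> a \<in> Aset q \<Longrightarrow> delta (Polynomial.smult c a) = [:c:] \<cdot>\<^sub>m delta a"
    and is_der_mult: "a \<in> Aset q \<Longrightarrow> b \<in> Aset q \<Longrightarrow>
      delta (a * b) = Psi a \<star> delta b + delta a \<star> Phi b"
  using assms unfolding is_der_def by auto

lemmas alg_hom_A_dims = alg_hom_A_carrier[THEN carrier_matD(1)] alg_hom_A_carrier[THEN carrier_matD(2)]

lemmas is_der_dims = is_der_carrier[THEN carrier_matD(1)] is_der_carrier[THEN carrier_matD(2)]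

lemma alg_hom_A_0:
  fixes P :: "'k poly \<Rightarrow> 'k poly mat"
  assumes "alg_hom_A q n P"
  shows "P 0 = 0\<^sub>m n n"
  using mat_add_self_eq_imp_zero[OF alg_hom_A_carrier[OF assms Aset_0]]
    alg_hom_A_add[OF assms Aset_0 Aset_0]
  by (metis add_0_left)

lemma alg_hom_A_const:
  fixes P :: "'k poly \<Rightarrow> 'k poly mat"
  assumes "alg_hom_A q n P" and "c \<in> Fq q"
  shows "P [:c:] = [:c:] \<cdot>\<^sub>m 1\<^sub>m n"
  using alg_hom_A_smult[OF assms Aset_1] by (simp add: alg_hom_A_1[OF assms(1)])

lemma alg_hom_A_pCons:
  assumes P: "alg_hom_A q n P" and a: "a \<in> Fq q" and p: "p \<in> Aset q"
  shows "P (pCons a p) = [:a:] \<cdot>\<^sub>m 1\<^sub>m n + P tvar \<star> P p"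
proof -
  have "pCons a p = [:a:] + tvar * p" by (simp add: tvar_def)
  moreover have "[:a:] \<in> Aset q" "tvar * p \<in> Aset q"
    using a p by (simp_all add: tvar_def Aset_pCons_iff)
  ultimately show ?thesis
    using p by (simp add: alg_hom_A_add[OF P] alg_hom_A_mult[OF P] alg_hom_A_const[OF P a])
qed

lemma is_der_1:
  fixes Phi Psi delta :: "'k poly \<Rightarrow> 'k poly mat"
  assumes "is_der q d Phi e Psi delta" "alg_hom_A q d Phi" "alg_hom_A q e Psi"
  shows "delta 1 = 0\<^sub>m e d"
proof -
  have delta_1: "delta 1 \<in> carrier_mat e d" by (rule is_der_carrier[OF assms(1) Aset_1])
  have "delta 1 = 1\<^sub>m e \<star> delta 1 + delta 1 \<star> 1\<^sub>m d"
    using is_der_mult[OF assms(1) Aset_1 Aset_1]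
    by (simp only: mult_1 alg_hom_A_1[OF assms(2)] alg_hom_A_1[OF assms(3)])
  also have "\<dots> = delta 1 + delta 1" using delta_1 by simp
  finally show ?thesis by (metis mat_add_self_eq_imp_zero[OF delta_1])
qed

lemma tmorph_id:
  "(P :: 'k poly \<Rightarrow> 'k poly mat) tvar \<in> carrier_mat n n \<Longrightarrow> tmorph q n P n P (1\<^sub>m n)"
  by (simp add: tmorph_def)

lemma tmorph_commute:
  fixes Phi Xi :: "'k poly \<Rightarrow> 'k poly mat"
  assumes Phi: "alg_hom_A q d Phi" and Xi: "alg_hom_A q r Xi" and g: "tmorph q r Xi d Phi g"
  shows "b \<in> Aset q \<Longrightarrow> g \<star> Xi b = Phi b \<star> g"
proof (induction b rule: pCons_induct)
  case 0
  have "g \<in> carrier_mat d r" using g by (simp add: tmorph_def)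
  then show ?case by (simp add: alg_hom_A_0[OF Phi] alg_hom_A_0[OF Xi])
next
  case (pCons a p)
  then have a: "a \<in> Fq q" and p: "p \<in> Aset q" by (simp_all add: Aset_pCons_iff)
  have "g \<in> carrier_mat d r" and gt: "g \<star> Xi tvar = Phi tvar \<star> g"
    using g by (simp_all add: tmorph_def)
  note dims = carrier_matD[OF this(1)] alg_hom_A_dims[OF Phi] alg_hom_A_dims[OF Xi]
  have "g \<star> Xi (pCons a p) = [:a:] \<cdot>\<^sub>m g + g \<star> Xi tvar \<star> Xi p"
    using a p dims
    by (simp add: alg_hom_A_pCons[OF Xi a p] tmat_mult_add_right tmat_mult_smult_right tmat_mult_assoc)
  also have "\<dots> = [:a:] \<cdot>\<^sub>m g + Phi tvar \<star> Phi p \<star> g"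
    using p dims by (simp add: gt tmat_mult_assoc pCons.IH[OF p])
  also have "\<dots> = Phi (pCons a p) \<star> g"
    using a p dims
    by (simp add: alg_hom_A_pCons[OF Phi a p] tmat_mult_add_left tmat_mult_smult_left)
  finally show ?case .
qed

lemma is_der_comp_right:
  fixes Phi Psi Xi delta :: "'k poly \<Rightarrow> 'k poly mat"
  assumes delta: "is_der q d Phi e Psi delta" and Phi: "alg_hom_A q d Phi" and Psi: "alg_hom_A q e Psi"
    and Xi: "alg_hom_A q r Xi" and g: "tmorph q r Xi d Phi g"
  shows "is_der q r Xi e Psi (\<lambda>a. delta a \<star> g)"
  unfolding is_der_def
proof (intro conjI ballI)
  have "g \<in> carrier_mat d r" using g by (simp add: tmorph_def)
  note dims = carrier_matD[OF this] alg_hom_A_dims[OF Phi] alg_hom_A_dims[OF Psi]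
    alg_hom_A_dims[OF Xi] is_der_dims[OF delta]
  fix a b :: "'k poly" assume a: "a \<in> Aset q" and b: "b \<in> Aset q"
  have "delta (a * b) \<star> g = Psi a \<star> (delta b \<star> g) + delta a \<star> (Phi b \<star> g)"
    using a b dims by (simp add: is_der_mult[OF delta] tmat_mult_add_left tmat_mult_assoc)
  also have "\<dots> = Psi a \<star> (delta b \<star> g) + (delta a \<star> g) \<star> Xi b"
    using a b dims by (simp add: tmorph_commute[OF Phi Xi g b] tmat_mult_assoc)
  finally show "delta (a * b) \<star> g = Psi a \<star> (delta b \<star> g) + (delta a \<star> g) \<star> Xi b" .
  show "delta (a + b) \<star> g = delta a \<star> g + delta b \<star> g"
    using a b dims by (simp add: is_der_add[OF delta] tmat_mult_add_left)
next
  fix a :: "'k poly" and c assume a: "a \<in> Aset q"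
  show "delta a \<star> g \<in> carrier_mat e r"
    using g is_der_carrier[OF delta a] by (auto simp: tmorph_def)
  show "delta (Polynomial.smult c a) \<star> g = [:c:] \<cdot>\<^sub>m (delta a \<star> g)" if "c \<in> Fq q"
    by (simp add: is_der_smult[OF delta that a] tmat_mult_smult_left)
qed

lemma is_der_comp_left:
  fixes Phi Psi Xi delta :: "'k poly \<Rightarrow> 'k poly mat"
  assumes delta: "is_der q d Phi e Psi delta" and Phi: "alg_hom_A q d Phi" and Psi: "alg_hom_A q e Psi"
    and Xi: "alg_hom_A q r Xi" and f: "tmorph q e Psi r Xi f"
  shows "is_der q d Phi r Xi (\<lambda>a. f \<star> delta a)"
  unfolding is_der_def
proof (intro conjI ballI)
  have "f \<in> carrier_mat r e" using f by (simp add: tmorph_def)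
  note dims = carrier_matD[OF this] alg_hom_A_dims[OF Phi] alg_hom_A_dims[OF Psi]
    alg_hom_A_dims[OF Xi] is_der_dims[OF delta]
  fix a b :: "'k poly" assume a: "a \<in> Aset q" and b: "b \<in> Aset q"
  have "f \<star> delta (a * b) = f \<star> Psi a \<star> delta b + f \<star> delta a \<star> Phi b"
    using a b dims by (simp add: is_der_mult[OF delta] tmat_mult_add_right tmat_mult_assoc)
  also have "\<dots> = Xi a \<star> (f \<star> delta b) + f \<star> delta a \<star> Phi b"
    using a b dims by (simp add: tmorph_commute[OF Xi Psi f a] tmat_mult_assoc)
  finally show "f \<star> delta (a * b) = Xi a \<star> (f \<star> delta b) + f \<star> delta a \<star> Phi b" .
  show "f \<star> delta (a + b) = f \<star> delta a + f \<star> delta b"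
    using a b dims by (simp add: is_der_add[OF delta] tmat_mult_add_right)
  fix c :: 'k assume "c \<in> Fq q"
  then show "f \<star> delta (Polynomial.smult c a) = [:c:] \<cdot>\<^sub>m (f \<star> delta a)"
    using a dims by (simp add: is_der_smult[OF delta _ a] tmat_mult_smult_right)
next
  fix a :: "'k poly" assume a: "a \<in> Aset q"
  show "f \<star> delta a \<in> carrier_mat r d"
    using f is_der_carrier[OF delta a] by (auto simp: tmorph_def)
qed

section \<open>Extensions, pullbacks and pushouts\<close>

lemma alg_hom_A_ext:
  fixes Phi Psi delta :: "'k poly \<Rightarrow> 'k poly mat"
  assumes Phi: "alg_hom_A q d Phi" and Psi: "alg_hom_A q e Psi" and delta: "is_der q d Phi e Psi delta"
  shows "alg_hom_A q (d + e) (tmod_ext d e Phi delta Psi)"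
  unfolding alg_hom_A_def
proof (intro conjI ballI)
  fix a b :: "'k poly" assume a: "a \<in> Aset q" and b: "b \<in> Aset q"
  note carriers = alg_hom_A_carrier[OF Phi a] alg_hom_A_carrier[OF Psi a] is_der_carrier[OF delta a]
    alg_hom_A_carrier[OF Phi b] alg_hom_A_carrier[OF Psi b] is_der_carrier[OF delta b]
  have "tmod_ext d e Phi delta Psi a + tmod_ext d e Phi delta Psi b
      = four_block_mat (Phi a + Phi b) (0\<^sub>m d e + 0\<^sub>m d e) (delta a + delta b) (Psi a + Psi b)"
    by (rule add_four_block_mat) (use carriers in auto)
  then show "tmod_ext d e Phi delta Psi (a + b) = tmod_ext d e Phi delta Psi a + tmod_ext d e Phi delta Psi b"
    using a b by (simp add: alg_hom_A_add[OF Phi] alg_hom_A_add[OF Psi] is_der_add[OF delta])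
  have "tmod_ext d e Phi delta Psi a \<star> tmod_ext d e Phi delta Psi b
      = four_block_mat (Phi a \<star> Phi b + 0\<^sub>m d e \<star> delta b) (Phi a \<star> 0\<^sub>m d e + 0\<^sub>m d e \<star> Psi b)
          (delta a \<star> Phi b + Psi a \<star> delta b) (delta a \<star> 0\<^sub>m d e + Psi a \<star> Psi b)"
    by (rule tmat_mult_four_block) (use carriers in auto)
  also have "\<dots> = tmod_ext d e Phi delta Psi (a * b)"
    using a b carriers
    by (simp add: alg_hom_A_mult[OF Phi] alg_hom_A_mult[OF Psi] is_der_mult[OF delta]
        comm_add_mat[of "delta a \<star> Phi b" e d])
  finally show "tmod_ext d e Phi delta Psi (a * b) = tmod_ext d e Phi delta Psi a \<star> tmod_ext d e Phi delta Psi b" ..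
next
  fix a :: "'k poly" assume a: "a \<in> Aset q"
  note carriers = alg_hom_A_carrier[OF Phi a] alg_hom_A_carrier[OF Psi a] is_der_carrier[OF delta a]
  show "tmod_ext d e Phi delta Psi a \<in> carrier_mat (d + e) (d + e)"
    using carriers by auto
  fix c :: 'k assume c: "c \<in> Fq q"
  have "[:c:] \<cdot>\<^sub>m tmod_ext d e Phi delta Psi a
      = four_block_mat ([:c:] \<cdot>\<^sub>m Phi a) ([:c:] \<cdot>\<^sub>m 0\<^sub>m d e) ([:c:] \<cdot>\<^sub>m delta a) ([:c:] \<cdot>\<^sub>m Psi a)"
    by (rule smult_four_block_mat) (use carriers in auto)
  then show "tmod_ext d e Phi delta Psi (Polynomial.smult c a) = [:c:] \<cdot>\<^sub>m tmod_ext d e Phi delta Psi a"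
    using a c by (simp add: alg_hom_A_smult[OF Phi] alg_hom_A_smult[OF Psi] is_der_smult[OF delta])
next
  show "tmod_ext d e Phi delta Psi 1 = 1\<^sub>m (d + e)"
    by (simp add: alg_hom_A_1[OF Phi] alg_hom_A_1[OF Psi] is_der_1[OF delta Phi Psi])
qed

lemma tmodule_ext:
  fixes Phi Psi delta :: "'k poly \<Rightarrow> 'k poly mat"
  assumes Phi: "tmodule q theta d Phi" and Psi: "tmodule q theta e Psi"
    and delta: "is_der q d Phi e Psi delta"
  shows "tmodule q theta (d + e) (tmod_ext d e Phi delta Psi)"
proof -
  have Phi': "alg_hom_A q d Phi" and Psi': "alg_hom_A q e Psi"
    using Phi Psi by (simp_all add: tmodule_def)
  obtain a where a: "(const_part (Phi tvar) - theta \<cdot>\<^sub>m 1\<^sub>m d) ^\<^sub>m a = 0\<^sub>m d d"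
    using Phi by (auto simp: tmodule_def)
  obtain b where b: "(const_part (Psi tvar) - theta \<cdot>\<^sub>m 1\<^sub>m e) ^\<^sub>m b = 0\<^sub>m e e"
    using Psi by (auto simp: tmodule_def)
  note carriers = alg_hom_A_carrier[OF Phi' Aset_tvar] alg_hom_A_carrier[OF Psi' Aset_tvar]
    is_der_carrier[OF delta Aset_tvar]
  have "const_part (tmod_ext d e Phi delta Psi tvar) - theta \<cdot>\<^sub>m 1\<^sub>m (d + e)
      = four_block_mat (const_part (Phi tvar) - theta \<cdot>\<^sub>m 1\<^sub>m d) (0\<^sub>m d e) (const_part (delta tvar))
        (const_part (Psi tvar) - theta \<cdot>\<^sub>m 1\<^sub>m e)"
    by (rule eq_matI) (use carriers in \<open>auto simp: const_part_def\<close>)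
  moreover have "\<dots> ^\<^sub>m (b + a) = 0\<^sub>m (d + e) (d + e)"
    by (rule nilpotent_lower_block_mat[OF _ _ _ a b]) (use carriers in \<open>auto simp: const_part_def\<close>)
  ultimately have "(const_part (tmod_ext d e Phi delta Psi tvar) - theta \<cdot>\<^sub>m 1\<^sub>m (d + e)) ^\<^sub>m (b + a)
      = 0\<^sub>m (d + e) (d + e)"
    by simp
  then show ?thesis
    unfolding tmodule_def using alg_hom_A_ext[OF Phi' Psi' delta] by blast
qed

lemma tmorph_ext_map:
  fixes Phi Psi Xi Psi' delta delta' :: "'k poly \<Rightarrow> 'k poly mat"
  assumes g: "tmorph q r Xi d Phi g" and h: "tmorph q e' Psi' e Psi h"
    and "Phi tvar \<in> carrier_mat d d" "Psi tvar \<in> carrier_mat e e" "delta tvar \<in> carrier_mat e d"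
    and "Xi tvar \<in> carrier_mat r r" "Psi' tvar \<in> carrier_mat e' e'" "delta' tvar \<in> carrier_mat e' r"
    and compat: "delta tvar \<star> g = h \<star> delta' tvar"
  shows "tmorph q (r + e') (tmod_ext r e' Xi delta' Psi') (d + e) (tmod_ext d e Phi delta Psi)
      (four_block_mat g (0\<^sub>m d e') (0\<^sub>m e r) h)"
  unfolding tmorph_def
proof
  have gc: "g \<in> carrier_mat d r" and hc: "h \<in> carrier_mat e e'" using g h by (simp_all add: tmorph_def)
  then show "four_block_mat g (0\<^sub>m d e') (0\<^sub>m e r) h \<in> carrier_mat (d + e) (r + e')" by simp
  have "four_block_mat g (0\<^sub>m d e') (0\<^sub>m e r) h \<star> tmod_ext r e' Xi delta' Psi' tvar
      = four_block_mat (g \<star> Xi tvar) (0\<^sub>m d e') (h \<star> delta' tvar) (h \<star> Psi' tvar)"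
    using assms gc hc by (subst tmat_mult_four_block) auto
  also have "\<dots> = tmod_ext d e Phi delta Psi tvar \<star> four_block_mat g (0\<^sub>m d e') (0\<^sub>m e r) h"
    using assms gc hc by (subst tmat_mult_four_block) (auto simp: tmorph_def)
  finally show "four_block_mat g (0\<^sub>m d e') (0\<^sub>m e r) h \<star> tmod_ext r e' Xi delta' Psi' tvar
      = tmod_ext d e Phi delta Psi tvar \<star> four_block_mat g (0\<^sub>m d e') (0\<^sub>m e r) h" .
qed

lemma tmorph_into_ext_iff:
  fixes Xi Psi delta Z :: "'k poly \<Rightarrow> 'k poly mat"
  assumes "Xi tvar \<in> carrier_mat r r" "Psi tvar \<in> carrier_mat e e" "delta tvar \<in> carrier_mat e r"
    and "Z tvar \<in> carrier_mat s s" and "u \<in> carrier_mat r s" and "v \<in> carrier_mat e s"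
  shows "tmorph q s Z (r + e) (tmod_ext r e Xi delta Psi) (u @\<^sub>r v)
    \<longleftrightarrow> tmorph q s Z r Xi u \<and> v \<star> Z tvar = delta tvar \<star> u + Psi tvar \<star> v"
proof -
  note dims = assms[THEN carrier_matD(1)] assms[THEN carrier_matD(2)]
  have "(u @\<^sub>r v) \<star> Z tvar = (u \<star> Z tvar) @\<^sub>r (v \<star> Z tvar)"
    by (rule tmat_mult_append_rows_left) (use assms in auto)
  moreover have "tmod_ext r e Xi delta Psi tvar \<star> (u @\<^sub>r v)
      = (Xi tvar \<star> u) @\<^sub>r (delta tvar \<star> u + Psi tvar \<star> v)"
    using tmat_mult_four_block_append_rows[OF assms(1) zero_carrier_mat assms(3,2,5,6)] dims
    by simp
  moreover have "(u \<star> Z tvar) @\<^sub>r (v \<star> Z tvar) = (Xi tvar \<star> u) @\<^sub>r (delta tvar \<star> u + Psi tvar \<star> v)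
      \<longleftrightarrow> u \<star> Z tvar = Xi tvar \<star> u \<and> v \<star> Z tvar = delta tvar \<star> u + Psi tvar \<star> v"
    by (rule append_rows_inject) (use assms in auto)
  ultimately show ?thesis
    using assms by (auto simp: tmorph_def)
qed

lemma tmorph_from_ext_iff:
  fixes Phi Xi delta Z :: "'k poly \<Rightarrow> 'k poly mat"
  assumes "Phi tvar \<in> carrier_mat d d" "Xi tvar \<in> carrier_mat r r" "delta tvar \<in> carrier_mat r d"
    and "Z tvar \<in> carrier_mat s s" and "v \<in> carrier_mat s d" and "u \<in> carrier_mat s r"
  shows "tmorph q (d + r) (tmod_ext d r Phi delta Xi) s Z (row_block v u)
    \<longleftrightarrow> tmorph q r Xi s Z u \<and> v \<star> Phi tvar + u \<star> delta tvar = Z tvar \<star> v"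
proof -
  note dims = assms[THEN carrier_matD(1)] assms[THEN carrier_matD(2)]
  have "row_block v u \<star> tmod_ext d r Phi delta Xi tvar
      = row_block (v \<star> Phi tvar + u \<star> delta tvar) (u \<star> Xi tvar)"
    using tmat_mult_row_block_four_block[OF assms(5,6,1) zero_carrier_mat assms(3,2)] dims
    by simp
  moreover have "Z tvar \<star> row_block v u = row_block (Z tvar \<star> v) (Z tvar \<star> u)"
    by (rule tmat_mult_row_block_right) (use assms in auto)
  moreover have "row_block (v \<star> Phi tvar + u \<star> delta tvar) (u \<star> Xi tvar) = row_block (Z tvar \<star> v) (Z tvar \<star> u)
      \<longleftrightarrow> v \<star> Phi tvar + u \<star> delta tvar = Z tvar \<star> v \<and> u \<star> Xi tvar = Z tvar \<star> u"
    by (rule row_block_inject) (use assms in auto)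
  ultimately show ?thesis
    using assms by (auto simp: tmorph_def)
qed

lemma tmorph_ext_quotient:
  fixes Phi Psi delta :: "'k poly \<Rightarrow> 'k poly mat"
  assumes "Phi tvar \<in> carrier_mat d d" "Psi tvar \<in> carrier_mat e e" "delta tvar \<in> carrier_mat e d"
  shows "tmorph q (d + e) (tmod_ext d e Phi delta Psi) d Phi (row_block (1\<^sub>m d) (0\<^sub>m d e))"
  using assms assms[THEN carrier_matD(1)] assms[THEN carrier_matD(2)]
  by (subst tmorph_from_ext_iff) (auto simp: tmorph_def)

lemma tmorph_ext_sub:
  fixes Phi Psi delta :: "'k poly \<Rightarrow> 'k poly mat"
  assumes "Phi tvar \<in> carrier_mat d d" "Psi tvar \<in> carrier_mat e e" "delta tvar \<in> carrier_mat e d"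
  shows "tmorph q e Psi (d + e) (tmod_ext d e Phi delta Psi) (0\<^sub>m d e @\<^sub>r 1\<^sub>m e)"
  using assms assms[THEN carrier_matD(1)] assms[THEN carrier_matD(2)]
  by (subst tmorph_into_ext_iff) (auto simp: tmorph_def)

lemma pullback_ext_universal:
  fixes Phi Psi Xi delta Z :: "'k poly \<Rightarrow> 'k poly mat"
  assumes Phi: "Phi tvar \<in> carrier_mat d d" and Psi: "Psi tvar \<in> carrier_mat e e"
    and Xi: "Xi tvar \<in> carrier_mat r r" and delta: "delta tvar \<in> carrier_mat e d"
    and Z: "Z tvar \<in> carrier_mat s s" and g: "g \<in> carrier_mat d r"
    and u: "tmorph q s Z r Xi u" and v: "tmorph q s Z (d + e) (tmod_ext d e Phi delta Psi) v"
    and uv: "g \<star> u = row_block (1\<^sub>m d) (0\<^sub>m d e) \<star> v"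
  shows "\<exists>!w. tmorph q s Z (r + e) (tmod_ext r e Xi (\<lambda>a. delta a \<star> g) Psi) w
    \<and> row_block (1\<^sub>m r) (0\<^sub>m r e) \<star> w = u \<and> four_block_mat g (0\<^sub>m d e) (0\<^sub>m e r) (1\<^sub>m e) \<star> w = v"
proof -
  have uc: "u \<in> carrier_mat r s" and vc: "v \<in> carrier_mat (d + e) s"
    using u v by (simp_all add: tmorph_def)
  obtain v1 v2 where v1: "v1 \<in> carrier_mat d s" and v2: "v2 \<in> carrier_mat e s" and v_eq: "v = v1 @\<^sub>r v2"
    using append_rows_split[OF vc] by blast
  have v1_eq: "v1 = g \<star> u"
    using uv v1 v2 by (simp add: v_eq tmat_mult_row_block_one_zero)
  have "v2 \<star> Z tvar = delta tvar \<star> v1 + Psi tvar \<star> v2"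
    using v tmorph_into_ext_iff[where Xi = Phi and Psi = Psi and delta = delta and Z = Z,
        OF Phi Psi delta Z v1 v2]
    by (simp add: v_eq)
  then have v2_eq: "v2 \<star> Z tvar = (delta tvar \<star> g) \<star> u + Psi tvar \<star> v2"
    using carrier_matD[OF delta] carrier_matD[OF g] by (simp add: v1_eq tmat_mult_assoc)
  show ?thesis
  proof (rule ex1I[of _ "u @\<^sub>r v2"])
    show "tmorph q s Z (r + e) (tmod_ext r e Xi (\<lambda>a. delta a \<star> g) Psi) (u @\<^sub>r v2)
      \<and> row_block (1\<^sub>m r) (0\<^sub>m r e) \<star> (u @\<^sub>r v2) = u
      \<and> four_block_mat g (0\<^sub>m d e) (0\<^sub>m e r) (1\<^sub>m e) \<star> (u @\<^sub>r v2) = v"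
      using tmorph_into_ext_iff[where Xi = Xi and Psi = Psi and delta = "\<lambda>a. delta a \<star> g" and Z = Z,
          OF Xi Psi _ Z uc v2] delta g u v2_eq tmat_mult_row_block_one_zero[OF uc v2]
        tmat_mult_four_block_one_append_rows[OF g uc v2]
      by (simp add: v_eq v1_eq)
  next
    fix w assume w: "tmorph q s Z (r + e) (tmod_ext r e Xi (\<lambda>a. delta a \<star> g) Psi) w
      \<and> row_block (1\<^sub>m r) (0\<^sub>m r e) \<star> w = u \<and> four_block_mat g (0\<^sub>m d e) (0\<^sub>m e r) (1\<^sub>m e) \<star> w = v"
    then have "w \<in> carrier_mat (r + e) s" by (simp add: tmorph_def)
    then obtain w1 w2 where w1: "w1 \<in> carrier_mat r s" and w2: "w2 \<in> carrier_mat e s"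
      and w_eq: "w = w1 @\<^sub>r w2"
      using append_rows_split by blast
    then have "w1 = u" using w by (simp add: tmat_mult_row_block_one_zero)
    moreover have "(g \<star> w1) @\<^sub>r w2 = v1 @\<^sub>r v2"
      using w tmat_mult_four_block_one_append_rows[OF g w1 w2] by (simp add: w_eq v_eq)
    then have "w2 = v2" using append_rows_inject[OF _ w2 v1 v2] g w1 by auto
    ultimately show "w = u @\<^sub>r v2" by (simp add: w_eq)
  qed
qed

lemma pushout_ext_universal:
  fixes Phi Psi Xi delta Z :: "'k poly \<Rightarrow> 'k poly mat"
  assumes Phi: "Phi tvar \<in> carrier_mat d d" and Psi: "Psi tvar \<in> carrier_mat e e"
    and Xi: "Xi tvar \<in> carrier_mat r r" and delta: "delta tvar \<in> carrier_mat e d"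
    and Z: "Z tvar \<in> carrier_mat s s" and f: "f \<in> carrier_mat r e"
    and u: "tmorph q r Xi s Z u" and v: "tmorph q (d + e) (tmod_ext d e Phi delta Psi) s Z v"
    and uv: "u \<star> f = v \<star> (0\<^sub>m d e @\<^sub>r 1\<^sub>m e)"
  shows "\<exists>!w. tmorph q (d + r) (tmod_ext d r Phi (\<lambda>a. f \<star> delta a) Xi) s Z w
    \<and> w \<star> (0\<^sub>m d r @\<^sub>r 1\<^sub>m r) = u \<and> w \<star> four_block_mat (1\<^sub>m d) (0\<^sub>m d e) (0\<^sub>m r d) f = v"
proof -
  have uc: "u \<in> carrier_mat s r" and vc: "v \<in> carrier_mat s (d + e)"
    using u v by (simp_all add: tmorph_def)
  obtain v1 v2 where v1: "v1 \<in> carrier_mat s d" and v2: "v2 \<in> carrier_mat s e" and v_eq: "v = row_block v1 v2"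
    using row_block_split[OF vc] by blast
  have v2_eq: "v2 = u \<star> f"
    using uv v1 v2 by (simp add: v_eq tmat_mult_append_rows_zero_one)
  have "v1 \<star> Phi tvar + v2 \<star> delta tvar = Z tvar \<star> v1"
    using v tmorph_from_ext_iff[where Phi = Phi and Xi = Psi and delta = delta and Z = Z,
        OF Phi Psi delta Z v1 v2]
    by (simp add: v_eq)
  then have v1_eq: "v1 \<star> Phi tvar + u \<star> (f \<star> delta tvar) = Z tvar \<star> v1"
    using uc f by (simp add: v2_eq tmat_mult_assoc)
  show ?thesis
  proof (rule ex1I[of _ "row_block v1 u"])
    show "tmorph q (d + r) (tmod_ext d r Phi (\<lambda>a. f \<star> delta a) Xi) s Z (row_block v1 u)
      \<and> row_block v1 u \<star> (0\<^sub>m d r @\<^sub>r 1\<^sub>m r) = u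
      \<and> row_block v1 u \<star> four_block_mat (1\<^sub>m d) (0\<^sub>m d e) (0\<^sub>m r d) f = v"
      using tmorph_from_ext_iff[where Phi = Phi and Xi = Xi and delta = "\<lambda>a. f \<star> delta a" and Z = Z,
          OF Phi Xi _ Z v1 uc] delta f u v1_eq tmat_mult_row_block_four_block_one[OF f v1 uc]
        tmat_mult_append_rows_zero_one[OF v1 uc]
      by (simp add: v_eq v2_eq)
  next
    fix w assume w: "tmorph q (d + r) (tmod_ext d r Phi (\<lambda>a. f \<star> delta a) Xi) s Z w
      \<and> w \<star> (0\<^sub>m d r @\<^sub>r 1\<^sub>m r) = u \<and> w \<star> four_block_mat (1\<^sub>m d) (0\<^sub>m d e) (0\<^sub>m r d) f = v"
    then have "w \<in> carrier_mat s (d + r)" by (simp add: tmorph_def)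
    then obtain w1 w2 where w1: "w1 \<in> carrier_mat s d" and w2: "w2 \<in> carrier_mat s r"
      and w_eq: "w = row_block w1 w2"
      using row_block_split by blast
    then have "w2 = u" using w by (simp add: tmat_mult_append_rows_zero_one)
    moreover have "row_block w1 (w2 \<star> f) = row_block v1 v2"
      using w tmat_mult_row_block_four_block_one[OF f w1 w2] by (simp add: w_eq v_eq)
    then have "w1 = v1" using row_block_inject[OF w1 _ v1 v2] f w2 by auto
    ultimately show "w = row_block v1 u" by (simp add: w_eq)
  qed
qed

lemma pullback_ext:
  fixes Phi Psi Xi delta :: "'k poly \<Rightarrow> 'k poly mat"
  assumes Phi: "tmodule q theta d Phi" and Psi: "tmodule q theta e Psi"
    and delta: "is_der q d Phi e Psi delta"
    and Xi: "tmodule q theta r Xi" and g: "tmorph q r Xi d Phi g"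
  shows "is_pullback q theta (d + e) (tmod_ext d e Phi delta Psi) d Phi r Xi
      (row_block (1\<^sub>m d) (0\<^sub>m d e)) g (r + e) (tmod_ext r e Xi (\<lambda>a. delta a \<star> g) Psi)
      (row_block (1\<^sub>m r) (0\<^sub>m r e)) (four_block_mat g (0\<^sub>m d e) (0\<^sub>m e r) (1\<^sub>m e))"
proof -
  have Phi': "alg_hom_A q d Phi" and Psi': "alg_hom_A q e Psi" and Xi': "alg_hom_A q r Xi"
    using Phi Psi Xi by (simp_all add: tmodule_def)
  note carriers = alg_hom_A_carrier[OF Phi' Aset_tvar] alg_hom_A_carrier[OF Psi' Aset_tvar]
    alg_hom_A_carrier[OF Xi' Aset_tvar] is_der_carrier[OF delta Aset_tvar]
  have gc: "g \<in> carrier_mat d r" using g by (simp add: tmorph_def)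
  have "tmodule q theta (r + e) (tmod_ext r e Xi (\<lambda>a. delta a \<star> g) Psi)"
    by (rule tmodule_ext[OF Xi Psi is_der_comp_right[OF delta Phi' Psi' Xi' g]])
  moreover have "tmorph q (r + e) (tmod_ext r e Xi (\<lambda>a. delta a \<star> g) Psi) r Xi (row_block (1\<^sub>m r) (0\<^sub>m r e))"
    by (rule tmorph_ext_quotient) (use carriers gc in auto)
  moreover have "tmorph q (r + e) (tmod_ext r e Xi (\<lambda>a. delta a \<star> g) Psi) (d + e) (tmod_ext d e Phi delta Psi)
      (four_block_mat g (0\<^sub>m d e) (0\<^sub>m e r) (1\<^sub>m e))"
    by (rule tmorph_ext_map[OF g tmorph_id]) (use carriers gc in auto)
  moreover have "g \<star> row_block (1\<^sub>m r) (0\<^sub>m r e)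
      = row_block (1\<^sub>m d) (0\<^sub>m d e) \<star> four_block_mat g (0\<^sub>m d e) (0\<^sub>m e r) (1\<^sub>m e)"
    using carrier_matD[OF gc]
    by (simp add: tmat_mult_row_block_right[OF gc one_carrier_mat zero_carrier_mat]
        tmat_mult_row_block_four_block[OF one_carrier_mat zero_carrier_mat gc zero_carrier_mat
          zero_carrier_mat one_carrier_mat])
  ultimately show ?thesis
    unfolding is_pullback_def using pullback_ext_universal carriers gc
    by (simp add: tmodule_def alg_hom_A_carrier)
qed

lemma pushout_ext:
  fixes Phi Psi Xi delta :: "'k poly \<Rightarrow> 'k poly mat"
  assumes Phi: "tmodule q theta d Phi" and Psi: "tmodule q theta e Psi"
    and delta: "is_der q d Phi e Psi delta"
    and Xi: "tmodule q theta r Xi" and f: "tmorph q e Psi r Xi f"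
  shows "is_pushout q theta (d + e) (tmod_ext d e Phi delta Psi) e Psi r Xi
      (0\<^sub>m d e @\<^sub>r 1\<^sub>m e) f (d + r) (tmod_ext d r Phi (\<lambda>a. f \<star> delta a) Xi)
      (0\<^sub>m d r @\<^sub>r 1\<^sub>m r) (four_block_mat (1\<^sub>m d) (0\<^sub>m d e) (0\<^sub>m r d) f)"
proof -
  have Phi': "alg_hom_A q d Phi" and Psi': "alg_hom_A q e Psi" and Xi': "alg_hom_A q r Xi"
    using Phi Psi Xi by (simp_all add: tmodule_def)
  note carriers = alg_hom_A_carrier[OF Phi' Aset_tvar] alg_hom_A_carrier[OF Psi' Aset_tvar]
    alg_hom_A_carrier[OF Xi' Aset_tvar] is_der_carrier[OF delta Aset_tvar]
  have fc: "f \<in> carrier_mat r e" using f by (simp add: tmorph_def)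
  have "tmodule q theta (d + r) (tmod_ext d r Phi (\<lambda>a. f \<star> delta a) Xi)"
    by (rule tmodule_ext[OF Phi Xi is_der_comp_left[OF delta Phi' Psi' Xi' f]])
  moreover have "tmorph q r Xi (d + r) (tmod_ext d r Phi (\<lambda>a. f \<star> delta a) Xi) (0\<^sub>m d r @\<^sub>r 1\<^sub>m r)"
    by (rule tmorph_ext_sub) (use carriers fc in auto)
  moreover have "tmorph q (d + e) (tmod_ext d e Phi delta Psi) (d + r) (tmod_ext d r Phi (\<lambda>a. f \<star> delta a) Xi)
      (four_block_mat (1\<^sub>m d) (0\<^sub>m d e) (0\<^sub>m r d) f)"
    by (rule tmorph_ext_map[OF tmorph_id f]) (use carriers fc in auto)
  moreover have "(0\<^sub>m d r @\<^sub>r 1\<^sub>m r) \<star> f = four_block_mat (1\<^sub>m d) (0\<^sub>m d e) (0\<^sub>m r d) f \<star> (0\<^sub>m d e @\<^sub>r 1\<^sub>m e)"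
    using carrier_matD[OF fc]
    by (simp add: tmat_mult_append_rows_left[OF zero_carrier_mat one_carrier_mat fc]
        tmat_mult_four_block_append_rows[OF one_carrier_mat zero_carrier_mat zero_carrier_mat fc
          zero_carrier_mat one_carrier_mat])
  ultimately show ?thesis
    unfolding is_pushout_def using pushout_ext_universal carriers fc
    by (simp add: tmodule_def alg_hom_A_carrier)
qed

end

theorem theorem10p1:
  fixes p m q :: nat and theta :: "'k::field"
    and d e :: nat and Phi Psi delta :: "'k poly \<Rightarrow> 'k poly mat"
  assumes "prime p" and "of_nat p = (0::'k)" and "m \<ge> 1" and "q = p ^ m"
    and "card (Fq q :: 'k set) = q"
    and "tmodule q theta d Phi" and "tmodule q theta e Psi"
    and "is_der q d Phi e Psi delta"
  defines "X \<equiv> \<lambda>a. four_block_mat (Phi a) (0\<^sub>m d e) (delta a) (Psi a)"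
    and "IM \<equiv> 0\<^sub>m d e @\<^sub>r 1\<^sub>m e"
    and "PiM \<equiv> row_block (1\<^sub>m d) (0\<^sub>m d e)"
  shows
   "(\<forall>r Xi g. tmodule q theta r Xi \<and> tmorph q r Xi d Phi g \<longrightarrow>
       is_pullback q theta (d + e) X d Phi r Xi PiM g
         (r + e) (\<lambda>a. four_block_mat (Xi a) (0\<^sub>m r e) (tmat_mult q (delta a) g) (Psi a))
         (row_block (1\<^sub>m r) (0\<^sub>m r e))
         (four_block_mat g (0\<^sub>m d e) (0\<^sub>m e r) (1\<^sub>m e)))
  \<and> (\<forall>r Xi f. tmodule q theta r Xi \<and> tmorph q e Psi r Xi f \<longrightarrow>
       is_pushout q theta (d + e) X e Psi r Xi IM f
         (d + r) (\<lambda>a. four_block_mat (Phi a) (0\<^sub>m d r) (tmat_mult q f (delta a)) (Xi a))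
         (0\<^sub>m d r @\<^sub>r 1\<^sub>m r)
         (four_block_mat (1\<^sub>m d) (0\<^sub>m d e) (0\<^sub>m r d) f))"
proof -
  have "CHAR('k) dvd p" using assms(2) by (simp add: of_nat_eq_0_iff_char_dvd)
  moreover have "CHAR('k) \<noteq> 1" by simp
  ultimately have "CHAR('k) = p" using \<open>prime p\<close> by (metis prime_nat_iff)
  then interpret q_frobenius q "TYPE('k)"
    by unfold_locales (use \<open>prime p\<close> \<open>q = p ^ m\<close> freshmans_dream' in blast)
  show ?thesis
    unfolding X_def IM_def PiM_def
    using pullback_ext[OF assms(6-8)] pushout_ext[OF assms(6-8)] by blast
qed

end
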